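(* Let $m\in\mathbb{N}$ and $\beta\in(1,\frac{m+2}{2})$. Every $x$ in the interior of the switch region $[\frac{1}{\beta},\frac{(m-1)\beta+1}{\beta(\beta-1)}]$ lies in the interior of some choice interval.
   Context: For $i\in\{1,\ldots,m\}$ the $i$-th choice interval is $[\frac{i}{\beta},\frac{(i-1)\beta+m-(i-1)}{\beta(\beta-1)}]$. *)

theory Defs
  imports "HOL-Analysis.Analysis"
begin

definition choice_interval :: "nat \<Rightarrow> real \<Rightarrow> nat \<Rightarrow> real set" where
  "choice_interval m \<beta> i =
     {real i / \<beta> .. ((real i - 1) * \<beta> + real m - (real i - 1)) / (\<beta> * (\<beta> - 1))}"

definition switch_region :: "nat \<Rightarrow> real \<Rightarrow> real set" where
  "switch_region m \<beta> = {1 / \<beta> .. ((real m - 1) * \<beta> + 1) / (\<beta> * (\<beta> - 1))}"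

end

theory Submission
  imports Defs
begin

text \<open>Write \<open>k = \<lceil>x\<beta>\<rceil>\<close>, so that \<open>(k - 1)/\<beta> < x \<le> k/\<beta>\<close> and \<open>k \<ge> 2\<close> because \<open>x > 1/\<beta>\<close>.
  If \<open>k - 1 \<ge> m\<close>, the last choice interval works, since its right end point is that of the
  switch region. Otherwise take \<open>i = k - 1\<close>: the bound \<open>\<beta> < (m + 2)/2\<close> is exactly what makes
  every choice interval reach beyond \<open>(i + 1)/\<beta>\<close>, so \<open>x\<close> lies strictly inside the \<open>i\<close>-th one.\<close>

lemma interior_choice_interval:
  "interior (choice_interval m \<beta> i) =
     {real i / \<beta> <..< ((real i - 1) * \<beta> + real m - (real i - 1)) / (\<beta> * (\<beta> - 1))}"
  unfolding choice_interval_def by simp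

lemma interior_switch_region:
  "interior (switch_region m \<beta>) = {1 / \<beta> <..< ((real m - 1) * \<beta> + 1) / (\<beta> * (\<beta> - 1))}"
  unfolding switch_region_def by simp

lemma choice_interval_upper_last:
  "((real m - 1) * \<beta> + real m - (real m - 1)) / (\<beta> * (\<beta> - 1))
     = ((real m - 1) * \<beta> + 1) / (\<beta> * (\<beta> - 1))"
  by (simp add: algebra_simps)

lemma choice_interval_upper_gt:
  fixes t \<beta> :: real
  assumes "1 < \<beta>" and "2 * (\<beta> - 1) < real m"
  shows "(t + 1) / \<beta> < ((t - 1) * \<beta> + real m - (t - 1)) / (\<beta> * (\<beta> - 1))"
proof -
  have pos: "\<beta> * (\<beta> - 1) > 0" using assms(1) by simp
  have "(t + 1) * (\<beta> - 1) = (t - 1) * \<beta> + real m - (t - 1) + (2 * (\<beta> - 1) - real m)"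
    by (simp add: algebra_simps)
  then have "(t + 1) * (\<beta> - 1) < (t - 1) * \<beta> + real m - (t - 1)"
    using assms(2) by linarith
  then have "(t + 1) * (\<beta> - 1) / (\<beta> * (\<beta> - 1)) < ((t - 1) * \<beta> + real m - (t - 1)) / (\<beta> * (\<beta> - 1))"
    using pos by (rule divide_strict_right_mono)
  moreover have "(t + 1) * (\<beta> - 1) / (\<beta> * (\<beta> - 1)) = (t + 1) / \<beta>"
    using assms(1) by (simp add: field_simps)
  ultimately show ?thesis by simp
qed

lemma ceiling_bracket_div:
  fixes x \<beta> :: real
  assumes "0 < \<beta>"
  shows "(real_of_int \<lceil>x * \<beta>\<rceil> - 1) / \<beta> < x" and "x \<le> real_of_int \<lceil>x * \<beta>\<rceil> / \<beta>"
  using assms by (simp_all add: field_simps ceiling_correct) linarith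

theorem lemma2p5:
  fixes m :: nat and \<beta> x :: real
  assumes "1 < \<beta>" and "\<beta> < (real m + 2) / 2"
    and "x \<in> interior (switch_region m \<beta>)"
  shows "\<exists>i\<in>{1..m}. x \<in> interior (choice_interval m \<beta> i)"
proof -
  have gap: "2 * (\<beta> - 1) < real m" and m: "m \<ge> 1"
    using assms(1,2) by (simp_all add: field_simps)
  from assms(3) have x_low: "1 / \<beta> < x"
    and x_high: "x < ((real m - 1) * \<beta> + 1) / (\<beta> * (\<beta> - 1))"
    unfolding interior_switch_region by auto
  define k where "k = \<lceil>x * \<beta>\<rceil>"
  have k_low: "(real_of_int k - 1) / \<beta> < x" and k_high: "x \<le> real_of_int k / \<beta>"
    unfolding k_def using ceiling_bracket_div assms(1) by auto
  have "k \<ge> 2"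
    using x_low k_high assms(1) by (simp add: field_simps)
  define i where "i = nat (min (int m) (k - 1))"
  have i: "1 \<le> i" "i \<le> m" "real i = min (real m) (real_of_int k - 1)"
    using \<open>k \<ge> 2\<close> m unfolding i_def by auto
  have "real i / \<beta> \<le> (real_of_int k - 1) / \<beta>"
    using i(3) assms(1) by (intro divide_right_mono) auto
  with k_low have "real i / \<beta> < x" by linarith
  moreover have "x < ((real i - 1) * \<beta> + real m - (real i - 1)) / (\<beta> * (\<beta> - 1))"
  proof (cases "i = m")
    case True
    then show ?thesis using x_high choice_interval_upper_last by simp
  next
    case False
    then have "real_of_int k = real i + 1" using i(3) by (auto simp: min_def split: if_splits)
    then show ?thesis
      using k_high choice_interval_upper_gt[OF assms(1) gap, of "real i"] by simp
  qed
  ultimately show ?thesis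
    using i(1,2) unfolding interior_choice_interval by auto
qed

end
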